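(* Let $n\ge 1$, let $p\in[1,\infty]$, and let $0\le x_0\le x_1\le\dots\le x_{n-1}<1$ and $0\le y_0\le y_1\le\dots\le y_{n-1}<1$ be real numbers. Let $\tilde y_j = y_{j \bmod n} + \lfloor j/n\rfloor$ for all $j\in\mathbb Z$ (the periodic unrolling of $\vec y$ onto the real line). Then the optimal value of the circular problem $$\min_{c\in[0,1),\ s\in\{0,\dots,n-1\}} \Big\| \big( d^\circ((x_i+c)\bmod 1,\ y_{(i+s)\bmod n}) \big)_{i=0}^{n-1} \Big\|_p$$ equals the optimal value of the linear problem $$\inf_{c\in\mathbb R,\ s\in\mathbb Z} \Big\| \big( |x_i+c-\tilde y_{i+s}| \big)_{i=0}^{n-1} \Big\|_p .$$
   Context: For $a,b\in[0,1)$, the circular distance is $d^\circ(a,b)=\min\{|a-b|,\,1-|a-b|\}$. $\|\cdot\|_p$ denotes the $\ell_p$ norm of a vector in $\mathbb R^n$ (the maximum of absolute values when $p=\infty$). *)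

theory Defs
  imports Complex_Main "HOL-Library.Extended_Real"
begin

definition circ_dist :: "real \<Rightarrow> real \<Rightarrow> real" where
  "circ_dist a b = min \<bar>a - b\<bar> (1 - \<bar>a - b\<bar>)"

definition lp_norm :: "ereal \<Rightarrow> nat \<Rightarrow> (nat \<Rightarrow> real) \<Rightarrow> real" where
  "lp_norm p n v =
     (if p = \<infinity> then Max ((\<lambda>i. \<bar>v i\<bar>) ` {0..<n})
      else (\<Sum>i<n. \<bar>v i\<bar> powr real_of_ereal p) powr (1 / real_of_ereal p))"

definition ytilde :: "nat \<Rightarrow> (nat \<Rightarrow> real) \<Rightarrow> int \<Rightarrow> real" where
  "ytilde n y j = y (nat (j mod int n)) + of_int (j div int n)"

end

theory Submission
  imports Defs "HOL-Analysis.Analysis"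
begin

text \<open>For a fixed rotation c and shift s, each circular distance from x i + c to
y ((i + s) mod n) is realised by a point of the unrolled sequence ytilde whose index is congruent
to i + s modulo n. An assignment of such targets with pairwise distinct residues can be uncrossed:
swap two adjacent inverted targets, or, if the targets of the first and last point are more than a
period apart, swap them up to one period. By convexity of t \<mapsto> |t| powr p no uncrossing
increases the l_p norm, while the squared displacement of the target indices strictly decreases,
so one ends at a consecutive window of ytilde, a feasible point of the linear problem. Conversely,
reducing c modulo 1 and s modulo n turns a linear solution into a circular one that is no worse.\<close>

lemma convex_on_exchange_le:
  fixes f :: "real \<Rightarrow> real"
  assumes f: "convex_on UNIV f" and "a \<le> u" "u \<le> b" "u + w = a + b"
  shows "f u + f w \<le> f a + f b"
proof (cases "a = b")
  case True
  with assms show ?thesis by simp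
next
  case False
  define t where "t = (u - a) / (b - a)"
  have t: "0 \<le> t" "t \<le> 1"
    using assms False by (auto simp: t_def field_simps)
  have "t * (b - a) = u - a"
    using False by (simp add: t_def)
  then have "u = (1 - t) *\<^sub>R a + t *\<^sub>R b" "w = (1 - (1 - t)) *\<^sub>R a + (1 - t) *\<^sub>R b"
    using assms by (simp_all add: algebra_simps)
  with convex_onD[OF f, of t a b] convex_onD[OF f, of "1 - t" a b] t
  have "f u + f w \<le> ((1 - t) * f a + t * f b) + (t * f a + (1 - t) * f b)"
    by simp
  also have "\<dots> = f a + f b"
    by (simp add: algebra_simps)
  finally show ?thesis .
qed

lemma convex_on_abs_powr:
  fixes q :: real
  assumes q: "1 \<le> q"
  shows "convex_on UNIV (\<lambda>x. \<bar>x\<bar> powr q)"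
proof (rule convex_onI)
  fix t x y :: real
  assume t: "0 < t" "t < 1"
  have scaled: "(s * b) powr q \<le> s * b powr q" if "0 \<le> s" "s \<le> 1" "0 \<le> b" for s b :: real
  proof -
    have "s powr q \<le> s"
      using that q by (metis powr_one_gt_zero_iff powr_mono')
    then show ?thesis
      using that by (simp add: powr_mult mult_right_mono)
  qed
  have "\<bar>(1 - t) *\<^sub>R x + t *\<^sub>R y\<bar> powr q \<le> ((1 - t) * \<bar>x\<bar> + t * \<bar>y\<bar>) powr q"
    using t q abs_triangle_ineq[of "(1 - t) * x" "t * y"] by (intro powr_mono2) (auto simp: abs_mult)
  also have "\<dots> \<le> (1 - t) * \<bar>x\<bar> powr q + t * \<bar>y\<bar> powr q"
  proof (cases "x = 0 \<or> y = 0")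
    case True
    then show ?thesis
      using t scaled[of t "\<bar>y\<bar>"] scaled[of "1 - t" "\<bar>x\<bar>"] by auto
  next
    case False
    then have "\<bar>x\<bar> \<in> {0<..}" "\<bar>y\<bar> \<in> {0<..}"
      by auto
    from convex_onD[OF powr_convex[OF q] _ _ this, of t] t show ?thesis
      by simp
  qed
  finally show "\<bar>(1 - t) *\<^sub>R x + t *\<^sub>R y\<bar> powr q \<le> (1 - t) * \<bar>x\<bar> powr q + t * \<bar>y\<bar> powr q" .
qed simp

lemma sum_change_two_points:
  fixes h h' :: "'a \<Rightarrow> 'b::ab_group_add"
  assumes "finite A" "i \<in> A" "j \<in> A" "i \<noteq> j" and same: "\<And>k. k \<noteq> i \<Longrightarrow> k \<noteq> j \<Longrightarrow> h' k = h k"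
  shows "sum h' A = sum h A - (h i + h j) + (h' i + h' j)"
proof -
  have split: "sum g A = g i + g j + sum g (A - {i} - {j})" for g :: "'a \<Rightarrow> 'b"
    using assms by (simp add: sum.remove[of A i] sum.remove[of "A - {i}" j] algebra_simps)
  have "sum h' (A - {i} - {j}) = sum h (A - {i} - {j})"
    by (rule sum.cong) (auto simp: same)
  then show ?thesis
    using split[of h] split[of h'] by (simp add: algebra_simps)
qed

lemma lp_norm_nonneg:
  assumes "1 \<le> n"
  shows "0 \<le> lp_norm p n f"
proof -
  have "\<bar>f 0\<bar> \<le> Max ((\<lambda>i. \<bar>f i\<bar>) ` {0..<n})"
    using assms by (intro Max_ge) auto
  then have "0 \<le> Max ((\<lambda>i. \<bar>f i\<bar>) ` {0..<n})"
    by (meson abs_ge_zero order_trans)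
  then show ?thesis
    by (simp add: lp_norm_def)
qed

lemma lp_norm_cong:
  assumes "\<And>i. i < n \<Longrightarrow> \<bar>f i\<bar> = \<bar>g i\<bar>"
  shows "lp_norm p n f = lp_norm p n g"
proof -
  have "(\<lambda>i. \<bar>f i\<bar>) ` {0..<n} = (\<lambda>i. \<bar>g i\<bar>) ` {0..<n}"
    using assms by auto
  moreover have "(\<Sum>i<n. \<bar>f i\<bar> powr real_of_ereal p) = (\<Sum>i<n. \<bar>g i\<bar> powr real_of_ereal p)"
    using assms by (intro sum.cong) auto
  ultimately show ?thesis
    unfolding lp_norm_def by simp
qed

lemma lp_norm_infinity_le:
  assumes "\<And>k. k < n \<Longrightarrow> \<exists>l<n. \<bar>f k\<bar> \<le> \<bar>g l\<bar>"
  shows "lp_norm \<infinity> n f \<le> lp_norm \<infinity> n g"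
proof (cases "n = 0")
  case False
  have "\<bar>f k\<bar> \<le> Max ((\<lambda>i. \<bar>g i\<bar>) ` {0..<n})" if k: "k < n" for k
  proof -
    obtain l where "l < n" "\<bar>f k\<bar> \<le> \<bar>g l\<bar>"
      using assms[OF k] by blast
    moreover have "\<bar>g l\<bar> \<le> Max ((\<lambda>i. \<bar>g i\<bar>) ` {0..<n})"
      using \<open>l < n\<close> by (intro Max_ge) auto
    ultimately show ?thesis
      by linarith
  qed
  then show ?thesis
    using False unfolding lp_norm_def by (simp add: Max_le_iff)
qed (simp add: lp_norm_def)

lemma lp_norm_le_if_powr_sum_le:
  assumes p: "1 \<le> p" "p \<noteq> \<infinity>"
    and le: "(\<Sum>i<n. \<bar>f i\<bar> powr real_of_ereal p) \<le> (\<Sum>i<n. \<bar>g i\<bar> powr real_of_ereal p)"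
  shows "lp_norm p n f \<le> lp_norm p n g"
proof -
  have "0 < real_of_ereal p"
    using p by (cases p) auto
  with le have "(\<Sum>i<n. \<bar>f i\<bar> powr real_of_ereal p) powr (1 / real_of_ereal p)
      \<le> (\<Sum>i<n. \<bar>g i\<bar> powr real_of_ereal p) powr (1 / real_of_ereal p)"
    by (intro powr_mono2) (auto intro: sum_nonneg)
  then show ?thesis
    using p by (simp add: lp_norm_def)
qed

lemma lp_norm_mono:
  assumes p: "1 \<le> p" and le: "\<And>i. i < n \<Longrightarrow> \<bar>f i\<bar> \<le> \<bar>g i\<bar>"
  shows "lp_norm p n f \<le> lp_norm p n g"
proof (cases "p = \<infinity>")
  case True
  then show ?thesis
    using le by (auto intro: lp_norm_infinity_le)
next
  case False
  have "0 < real_of_ereal p"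
    using p False by (cases p) auto
  then show ?thesis
    using p False le by (intro lp_norm_le_if_powr_sum_le sum_mono powr_mono2) auto
qed

lemma lp_norm_exchange_le:
  assumes p: "1 \<le> p" and ij: "i < n" "j < n" "i \<noteq> j"
    and ab: "a \<le> b" "B \<le> A" and w: "w i = a - A" "w j = b - B"
  shows "lp_norm p n (w(i := a - B, j := b - A)) \<le> lp_norm p n w"
proof (cases "p = \<infinity>")
  case True
  have between: "\<bar>a - B\<bar> \<le> max \<bar>w i\<bar> \<bar>w j\<bar>" "\<bar>b - A\<bar> \<le> max \<bar>w i\<bar> \<bar>w j\<bar>"
    using ab w by auto
  have "\<exists>l<n. \<bar>(w(i := a - B, j := b - A)) k\<bar> \<le> \<bar>w l\<bar>" if "k < n" for k
  proof -
    have "\<exists>l\<in>{i, j}. \<bar>(w(i := a - B, j := b - A)) k\<bar> \<le> \<bar>w l\<bar>" if "k \<in> {i, j}"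
    proof -
      have "\<bar>(w(i := a - B, j := b - A)) k\<bar> \<le> max \<bar>w i\<bar> \<bar>w j\<bar>"
        using that between ij by auto
      moreover have "max \<bar>w i\<bar> \<bar>w j\<bar> = \<bar>w i\<bar> \<or> max \<bar>w i\<bar> \<bar>w j\<bar> = \<bar>w j\<bar>"
        by (simp add: max_def)
      ultimately show ?thesis
        by auto
    qed
    then show ?thesis
      using \<open>k < n\<close> ij by (cases "k \<in> {i, j}") auto
  qed
  then show ?thesis
    using True by (simp add: lp_norm_infinity_le)
next
  case False
  define q where "q = real_of_ereal p"
  have q: "1 \<le> q"
    using p False by (cases p) (auto simp: q_def)
  let ?h = "\<lambda>k. \<bar>w k\<bar> powr q" and ?h' = "\<lambda>k. \<bar>(w(i := a - B, j := b - A)) k\<bar> powr q"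
  have pair: "\<bar>a - B\<bar> powr q + \<bar>b - A\<bar> powr q \<le> \<bar>a - A\<bar> powr q + \<bar>b - B\<bar> powr q"
    using ab by (intro convex_on_exchange_le[OF convex_on_abs_powr[OF q]]) auto
  have "sum ?h' {..<n} = sum ?h {..<n} - (?h i + ?h j) + (?h' i + ?h' j)"
    using ij by (intro sum_change_two_points) auto
  also have "\<dots> \<le> sum ?h {..<n}"
    using pair ij w by simp
  finally show ?thesis
    using p False by (intro lp_norm_le_if_powr_sum_le) (simp_all add: q_def)
qed

text \<open>An assignment m sends point k to the index m k of the unrolled targets; every uncrossing
strictly decreases the displacement, which is thus the termination measure of the uncrossing.\<close>

definition displacement :: "nat \<Rightarrow> (nat \<Rightarrow> int) \<Rightarrow> int" where
  "displacement n m = (\<Sum>k<n. (m k - int k)\<^sup>2)"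

lemma displacement_nonneg: "0 \<le> displacement n m"
  by (simp add: displacement_def sum_nonneg)

lemma consecutive_if_increasing_span_lt:
  fixes m :: "nat \<Rightarrow> int"
  assumes inc: "\<And>i. Suc i < n \<Longrightarrow> m i < m (Suc i)" and span: "m (n - 1) < m 0 + int n"
    and k: "k < n"
  shows "m k = m 0 + int k"
proof -
  have gap: "m i + int (j - i) \<le> m j" if "i \<le> j" "j < n" for i j
    using that
  proof (induction j)
    case (Suc j)
    show ?case
    proof (cases "i = Suc j")
      case False
      with Suc.prems have "i \<le> j" "Suc j < n"
        by auto
      then have "m i + int (j - i) \<le> m j" "m j < m (Suc j)"
        using Suc.IH inc by auto
      with Suc.prems False show ?thesis
        by (simp add: Suc_diff_le)
    qed simp
  qed simp
  have "k \<le> n - 1" "n - 1 < n"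
    using k by auto
  with gap[of 0 k] gap[of k "n - 1"] span k show ?thesis
    by simp
qed

lemma residue_injective_cases:
  fixes m :: "nat \<Rightarrow> int"
  assumes n: "1 \<le> n" and inj: "inj_on (\<lambda>k. m k mod int n) {..<n}"
  obtains (consecutive) "\<And>i. Suc i < n \<Longrightarrow> m i < m (Suc i)" "m (n - 1) < m 0 + int n"
    | (adjacent_inversion) i where "Suc i < n" "m (Suc i) < m i"
    | (wrap_inversion) "m 0 + int n < m (n - 1)"
proof -
  have "m i \<noteq> m (Suc i)" if "Suc i < n" for i
    using inj_onD[OF inj, of i "Suc i"] that by auto
  moreover have "m (n - 1) \<noteq> m 0 + int n"
  proof (cases "n = 1")
    case False
    then show ?thesis
      using inj_onD[OF inj, of "n - 1" 0] n by auto
  qed simp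
  ultimately show ?thesis
    using that by (meson linorder_neqE)
qed

context
  fixes p :: ereal and n :: nat and Y :: "int \<Rightarrow> real" and v :: "nat \<Rightarrow> real"
  assumes p: "1 \<le> p" and n: "1 \<le> n"
    and Y_mono: "mono Y" and Y_period: "\<And>t. Y (t + int n) = Y t + 1"
    and v_mono: "mono_on {..<n} v" and v_span: "v (n - 1) \<le> v 0 + 1"
begin

lemma adjacent_inversion_step:
  assumes inj: "inj_on (\<lambda>k. m k mod int n) {..<n}" and i: "Suc i < n" and inv: "m (Suc i) < m i"
  obtains m' where "inj_on (\<lambda>k. m' k mod int n) {..<n}" "displacement n m' < displacement n m"
    "lp_norm p n (\<lambda>k. v k - Y (m' k)) \<le> lp_norm p n (\<lambda>k. v k - Y (m k))"
proof
  let ?\<tau> = "Transposition.transpose i (Suc i)"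
  let ?m' = "m \<circ> ?\<tau>"
  have "inj_on ((\<lambda>k. m k mod int n) \<circ> ?\<tau>) {..<n}"
    using inj i by (intro comp_inj_on) auto
  then show "inj_on (\<lambda>k. ?m' k mod int n) {..<n}"
    by (simp add: comp_def)
  let ?h = "\<lambda>k. (m k - int k)\<^sup>2" and ?h' = "\<lambda>k. (?m' k - int k)\<^sup>2"
  have "displacement n ?m' = displacement n m - (?h i + ?h (Suc i)) + (?h' i + ?h' (Suc i))"
    unfolding displacement_def using i by (intro sum_change_two_points) auto
  also have "\<dots> = displacement n m + 2 * (m (Suc i) - m i)"
    by (simp add: power2_eq_square algebra_simps)
  finally show "displacement n ?m' < displacement n m"
    using inv by simp
  have "(\<lambda>k. v k - Y (?m' k))
      = (\<lambda>k. v k - Y (m k))(i := v i - Y (m (Suc i)), Suc i := v (Suc i) - Y (m i))"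
    by (auto simp: fun_eq_iff transpose_def)
  then show "lp_norm p n (\<lambda>k. v k - Y (?m' k)) \<le> lp_norm p n (\<lambda>k. v k - Y (m k))"
    using p i inv by (simp only:) (intro lp_norm_exchange_le mono_onD[OF v_mono] monoD[OF Y_mono], auto)
qed

lemma wrap_inversion_step:
  assumes inj: "inj_on (\<lambda>k. m k mod int n) {..<n}" and wrap: "m 0 + int n < m (n - 1)"
  obtains m' where "inj_on (\<lambda>k. m' k mod int n) {..<n}" "displacement n m' < displacement n m"
    "lp_norm p n (\<lambda>k. v k - Y (m' k)) \<le> lp_norm p n (\<lambda>k. v k - Y (m k))"
proof
  have last: "n - 1 \<noteq> 0" "n - 1 < n"
    using wrap n by (auto simp: le_Suc_eq)
  let ?\<tau> = "Transposition.transpose 0 (n - 1)"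
  let ?m' = "m(0 := m (n - 1) - int n, n - 1 := m 0 + int n)"
  have "(\<lambda>k. ?m' k mod int n) = (\<lambda>k. m k mod int n) \<circ> ?\<tau>"
    using last by (auto simp: fun_eq_iff transpose_def)
  moreover have "inj_on ((\<lambda>k. m k mod int n) \<circ> ?\<tau>) {..<n}"
    using inj last by (intro comp_inj_on) auto
  ultimately show "inj_on (\<lambda>k. ?m' k mod int n) {..<n}"
    by simp
  let ?h = "\<lambda>k. (m k - int k)\<^sup>2" and ?h' = "\<lambda>k. (?m' k - int k)\<^sup>2"
  have "displacement n ?m' = displacement n m - (?h (n - 1) + ?h 0) + (?h' (n - 1) + ?h' 0)"
    unfolding displacement_def using last by (intro sum_change_two_points) auto
  also have "\<dots> = displacement n m + 2 * (m 0 + int n - m (n - 1))"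
    using last by (simp add: of_nat_diff power2_eq_square algebra_simps)
  finally show "displacement n ?m' < displacement n m"
    using wrap by simp
  \<comment> \<open>v 0 + 1 is the copy of v 0 one period to the right, so this is an ordinary uncrossing
    of v (n - 1) \<le> v 0 + 1.\<close>
  have "Y (m (n - 1) - int n) = Y (m (n - 1)) - 1"
    using Y_period[of "m (n - 1) - int n"] by simp
  then have "(\<lambda>k. v k - Y (?m' k))
      = (\<lambda>k. v k - Y (m k))(n - 1 := v (n - 1) - Y (m 0 + int n), 0 := (v 0 + 1) - Y (m (n - 1)))"
    using last by (auto simp: fun_eq_iff)
  moreover have "Y (m 0 + int n) \<le> Y (m (n - 1))"
    using wrap by (intro monoD[OF Y_mono]) simp
  ultimately show "lp_norm p n (\<lambda>k. v k - Y (?m' k)) \<le> lp_norm p n (\<lambda>k. v k - Y (m k))"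
    using p last v_span Y_period[of "m 0"] by (simp only:) (intro lp_norm_exchange_le, auto)
qed

lemma lp_norm_consecutive_assignment_le:
  assumes "inj_on (\<lambda>k. m k mod int n) {..<n}"
  shows "\<exists>s. lp_norm p n (\<lambda>k. v k - Y (s + int k)) \<le> lp_norm p n (\<lambda>k. v k - Y (m k))"
  using assms
proof (induction m rule: measure_induct_rule[where f = "\<lambda>m. nat (displacement n m)"])
  case (less m)
  have descend: ?case
    if "inj_on (\<lambda>k. m' k mod int n) {..<n}" "displacement n m' < displacement n m"
      "lp_norm p n (\<lambda>k. v k - Y (m' k)) \<le> lp_norm p n (\<lambda>k. v k - Y (m k))" for m'
  proof -
    have "nat (displacement n m') < nat (displacement n m)"
      using that(2) displacement_nonneg[of n m'] by simp
    with less.IH that(1) obtain s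
      where "lp_norm p n (\<lambda>k. v k - Y (s + int k)) \<le> lp_norm p n (\<lambda>k. v k - Y (m' k))"
      by blast
    with that(3) show ?thesis
      by (meson order_trans)
  qed
  from n less.prems show ?case
  proof (cases rule: residue_injective_cases)
    case consecutive
    then have "lp_norm p n (\<lambda>k. v k - Y (m 0 + int k)) = lp_norm p n (\<lambda>k. v k - Y (m k))"
      using consecutive_if_increasing_span_lt[OF consecutive] by (intro lp_norm_cong) presburger
    then show ?thesis
      by (intro exI[of _ "m 0"]) simp
  next
    case (adjacent_inversion i)
    obtain m' where "inj_on (\<lambda>k. m' k mod int n) {..<n}" "displacement n m' < displacement n m"
      "lp_norm p n (\<lambda>k. v k - Y (m' k)) \<le> lp_norm p n (\<lambda>k. v k - Y (m k))"
      by (rule adjacent_inversion_step[OF less.prems adjacent_inversion])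
    then show ?thesis
      by (rule descend)
  next
    case wrap_inversion
    obtain m' where "inj_on (\<lambda>k. m' k mod int n) {..<n}" "displacement n m' < displacement n m"
      "lp_norm p n (\<lambda>k. v k - Y (m' k)) \<le> lp_norm p n (\<lambda>k. v k - Y (m k))"
      by (rule wrap_inversion_step[OF less.prems wrap_inversion])
    then show ?thesis
      by (rule descend)
  qed
qed

end

lemma inj_on_add_mod:
  fixes s n :: nat
  shows "inj_on (\<lambda>i. (i + s) mod n) {..<n}"
proof
  fix i j assume "i \<in> {..<n}" "j \<in> {..<n}" and eq: "(i + s) mod n = (j + s) mod n"
  have "int ((i + s) mod n) = int ((j + s) mod n)"
    using eq by simp
  then have "(int i + int s) mod int n = (int j + int s) mod int n"
    by (simp add: zmod_int)
  then have "(int i + int s - int s) mod int n = (int j + int s - int s) mod int n"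
    by (rule mod_diff_cong) simp
  with \<open>i \<in> {..<n}\<close> \<open>j \<in> {..<n}\<close> show "i = j"
    by simp
qed

lemma ytilde_add_mult:
  assumes "r < n"
  shows "ytilde n y (int r + int n * q) = y r + of_int q"
  using assms by (simp add: ytilde_def)

lemma ytilde_add_period:
  assumes "1 \<le> n"
  shows "ytilde n y (t + int n) = ytilde n y t + 1"
  using assms by (simp add: ytilde_def)

lemma ytilde_mono:
  assumes n: "1 \<le> n" and y_mono: "mono_on {..<n} y" and y_span: "y (n - 1) \<le> y 0 + 1"
  shows "mono (ytilde n y)"
proof
  fix a b :: int
  assume ab: "a \<le> b"
  have res: "nat (t mod int n) < n" for t
    using n by (simp add: nat_less_iff)
  have div: "a div int n \<le> b div int n"
    using ab by (rule zdiv_mono1) (use n in simp)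
  show "ytilde n y a \<le> ytilde n y b"
  proof (cases "a div int n = b div int n")
    case True
    then have "a mod int n \<le> b mod int n"
      using ab by (metis add_le_cancel_left div_mult_mod_eq)
    then have "y (nat (a mod int n)) \<le> y (nat (b mod int n))"
      using res by (intro mono_onD[OF y_mono]) auto
    with True show ?thesis
      by (simp add: ytilde_def)
  next
    case False
    with div have "a div int n + 1 \<le> b div int n"
      by simp
    moreover have "nat (a mod int n) \<le> n - 1"
      using res[of a] by arith
    with res n have "y (nat (a mod int n)) \<le> y (n - 1)" "y 0 \<le> y (nat (b mod int n))"
      by (auto intro!: mono_onD[OF y_mono])
    ultimately show ?thesis
      using y_span by (simp add: ytilde_def)
  qed
qed

lemma ytilde_add_eq:
  assumes "1 \<le> n"
  shows "ytilde n y (int i + s) = y ((i + nat (s mod int n)) mod n) + of_int ((int i + s) div int n)"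
proof -
  have "int ((i + nat (s mod int n)) mod n) = (int i + s mod int n) mod int n"
    using assms by (simp add: zmod_int)
  also have "\<dots> = (int i + s) mod int n"
    by (simp add: mod_add_right_eq)
  finally show ?thesis
    unfolding ytilde_def by (metis nat_int)
qed

lemma circ_dist_le_abs_add_int: "circ_dist a b \<le> \<bar>a - b + of_int K\<bar>"
proof (cases "K = 0")
  case False
  then have "1 - \<bar>a - b\<bar> \<le> \<bar>a - b + of_int K\<bar>"
    by linarith
  then show ?thesis
    unfolding circ_dist_def by linarith
qed (simp add: circ_dist_def)

lemma circ_dist_nonneg: "\<bar>a - b\<bar> \<le> 1 \<Longrightarrow> 0 \<le> circ_dist a b"
  by (simp add: circ_dist_def)

lemma circ_dist_eq_abs_add_int:
  assumes "0 \<le> a" "a < 1" "0 \<le> b" "b < 1"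
  obtains K :: int where "circ_dist a b = \<bar>a - b + of_int K\<bar>"
proof (cases "\<bar>a - b\<bar> \<le> 1 - \<bar>a - b\<bar>")
  case True
  then show ?thesis
    using that[of 0] by (simp add: circ_dist_def)
next
  case False
  then show ?thesis
    using that[of "-1"] that[of 1] assms by (cases "b \<le> a") (auto simp: circ_dist_def)
qed

definition circular_cost :: "ereal \<Rightarrow> nat \<Rightarrow> (nat \<Rightarrow> real) \<Rightarrow> (nat \<Rightarrow> real) \<Rightarrow> real \<Rightarrow> nat \<Rightarrow> real"
  where "circular_cost p n x y c s = lp_norm p n (\<lambda>i. circ_dist (frac (x i + c)) (y ((i + s) mod n)))"

definition linear_cost :: "ereal \<Rightarrow> nat \<Rightarrow> (nat \<Rightarrow> real) \<Rightarrow> (nat \<Rightarrow> real) \<Rightarrow> real \<Rightarrow> int \<Rightarrow> real"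
  where "linear_cost p n x y c s = lp_norm p n (\<lambda>i. \<bar>x i + c - ytilde n y (int i + s)\<bar>)"

lemma circular_cost_le_linear_cost:
  assumes p: "1 \<le> p" and n: "1 \<le> n" and y_range: "\<And>j. j < n \<Longrightarrow> 0 \<le> y j \<and> y j < 1"
  shows "circular_cost p n x y (frac c) (nat (s mod int n)) \<le> linear_cost p n x y c s"
  unfolding circular_cost_def linear_cost_def
proof (rule lp_norm_mono[OF p])
  fix i assume "i < n"
  define r where "r = (i + nat (s mod int n)) mod n"
  define K where "K = \<lfloor>x i + c\<rfloor> - (int i + s) div int n"
  have "r < n"
    using n by (simp add: r_def)
  have "x i + c - ytilde n y (int i + s) = frac (x i + c) - y r + of_int K"
    using ytilde_add_eq[OF n] by (simp add: r_def K_def frac_def)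
  moreover have "0 \<le> circ_dist (frac (x i + c)) (y r)"
    using y_range[OF \<open>r < n\<close>] frac_lt_1[of "x i + c"] frac_ge_0[of "x i + c"]
    by (intro circ_dist_nonneg) (unfold abs_le_iff, linarith)
  ultimately show "\<bar>circ_dist (frac (x i + frac c)) (y ((i + nat (s mod int n)) mod n))\<bar>
      \<le> \<bar>\<bar>x i + c - ytilde n y (int i + s)\<bar>\<bar>"
    using circ_dist_le_abs_add_int[of "frac (x i + c)" "y r" K] by (simp add: r_def)
qed

lemma linear_cost_le_circular_cost:
  assumes p: "1 \<le> p" and n: "1 \<le> n"
    and x_mono: "mono_on {..<n} x" and x_span: "x (n - 1) \<le> x 0 + 1"
    and y_mono: "mono_on {..<n} y" and y_range: "\<And>j. j < n \<Longrightarrow> 0 \<le> y j \<and> y j < 1"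
  shows "\<exists>s'. linear_cost p n x y c s' \<le> circular_cost p n x y c s"
proof -
  define r where "r i = (i + s) mod n" for i
  have r: "r i < n" for i
    using n by (simp add: r_def)
  have "\<exists>K::int. circ_dist (frac (x i + c)) (y (r i)) = \<bar>frac (x i + c) - y (r i) + of_int K\<bar>" for i
    using y_range[OF r] frac_lt_1 by (metis circ_dist_eq_abs_add_int frac_ge_0)
  then obtain K :: "nat \<Rightarrow> int"
    where K: "\<And>i. circ_dist (frac (x i + c)) (y (r i)) = \<bar>frac (x i + c) - y (r i) + of_int (K i)\<bar>"
    by metis
  define m where "m i = int (r i) + int n * (\<lfloor>x i + c\<rfloor> - K i)" for i
  have "ytilde n y (m i) = y (r i) + of_int (\<lfloor>x i + c\<rfloor> - K i)" for i
    unfolding m_def by (rule ytilde_add_mult[OF r])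
  then have "x i + c - ytilde n y (m i) = frac (x i + c) - y (r i) + of_int (K i)" for i
    by (simp add: frac_def)
  then have circ_eq: "circ_dist (frac (x i + c)) (y (r i)) = \<bar>x i + c - ytilde n y (m i)\<bar>" for i
    using K by simp
  have "(\<lambda>i. m i mod int n) = (\<lambda>i. int (r i))"
    using r by (simp add: m_def fun_eq_iff)
  then have inj: "inj_on (\<lambda>i. m i mod int n) {..<n}"
    using inj_on_add_mod by (simp add: r_def inj_on_def)
  have y_span: "y (n - 1) \<le> y 0 + 1"
    using y_range[of 0] y_range[of "n - 1"] n by simp
  obtain s' where s': "lp_norm p n (\<lambda>i. x i + c - ytilde n y (s' + int i))
      \<le> lp_norm p n (\<lambda>i. x i + c - ytilde n y (m i))"
    using lp_norm_consecutive_assignment_le[OF p n ytilde_mono[OF n y_mono y_span]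
        ytilde_add_period[OF n] _ _ inj, of "\<lambda>i. x i + c"] x_mono x_span
    by (auto simp: mono_on_def monotone_on_def)
  have "linear_cost p n x y c s' = lp_norm p n (\<lambda>i. x i + c - ytilde n y (s' + int i))"
    unfolding linear_cost_def by (intro lp_norm_cong) (simp add: add.commute)
  also have "\<dots> \<le> lp_norm p n (\<lambda>i. x i + c - ytilde n y (m i))"
    by (fact s')
  also have "\<dots> = circular_cost p n x y c s"
    unfolding circular_cost_def using circ_eq by (intro lp_norm_cong) (simp add: r_def)
  finally show ?thesis ..
qed

lemma cINF_eq_if_dominated:
  fixes f :: "'a \<Rightarrow> 'c::conditionally_complete_lattice"
  assumes "A \<noteq> {}" "B \<noteq> {}" "bdd_below (f ` A)" "bdd_below (g ` B)"
    and "\<And>b. b \<in> B \<Longrightarrow> \<exists>a\<in>A. f a \<le> g b" "\<And>a. a \<in> A \<Longrightarrow> \<exists>b\<in>B. g b \<le> f a"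
  shows "(INF a\<in>A. f a) = (INF b\<in>B. g b)"
  using assms by (intro order.antisym cINF_mono) auto

theorem mainTheorem1:
  fixes n :: nat and p :: ereal and x y :: "nat \<Rightarrow> real"
  assumes "n \<ge> 1"
    and "1 \<le> p"
    and "0 \<le> x 0" and "\<forall>i j. i \<le> j \<and> j < n \<longrightarrow> x i \<le> x j" and "x (n - 1) < 1"
    and "0 \<le> y 0" and "\<forall>i j. i \<le> j \<and> j < n \<longrightarrow> y i \<le> y j" and "y (n - 1) < 1"
  shows "(INF cs \<in> {0..<(1::real)} \<times> {0..<n}.
            lp_norm p n (\<lambda>i. circ_dist (frac (x i + fst cs)) (y ((i + snd cs) mod n))))
       = (INF cs \<in> (UNIV :: real set) \<times> (UNIV :: int set).
            lp_norm p n (\<lambda>i. \<bar>x i + fst cs - ytilde n y (int i + snd cs)\<bar>))"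
proof -
  note n = assms(1) and p = assms(2)
  have x_mono: "mono_on {..<n} x" and y_mono: "mono_on {..<n} y"
    using assms(4,7) by (auto simp: monotone_on_def)
  have y_range: "0 \<le> y j \<and> y j < 1" if "j < n" for j
  proof -
    have "y 0 \<le> y j" "y j \<le> y (n - 1)"
      using that by (auto intro!: mono_onD[OF y_mono])
    with assms(6,8) show ?thesis
      by linarith
  qed
  have x_span: "x (n - 1) \<le> x 0 + 1"
    using assms(3,5) by simp
  let ?C = "\<lambda>cs. circular_cost p n x y (fst cs) (snd cs)"
    and ?L = "\<lambda>cs. linear_cost p n x y (fst cs) (snd cs)"
  have "(INF cs \<in> {0..<(1::real)} \<times> {0..<n}. ?C cs) = (INF cs \<in> UNIV \<times> UNIV. ?L cs)"
  proof (rule cINF_eq_if_dominated)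
    show "\<exists>ds\<in>{0..<1} \<times> {0..<n}. ?C ds \<le> ?L cs" for cs
      using circular_cost_le_linear_cost[OF p n y_range, where c = "fst cs" and s = "snd cs"] n
      by (intro bexI[of _ "(frac (fst cs), nat (snd cs mod int n))"]) (auto simp: frac_lt_1 nat_less_iff)
    show "\<exists>cs\<in>UNIV \<times> UNIV. ?L cs \<le> ?C ds" for ds
      using linear_cost_le_circular_cost[OF p n x_mono x_span y_mono y_range,
          where c = "fst ds" and s = "snd ds"]
      by auto
  qed (use n lp_norm_nonneg[OF n] in \<open>auto simp: circular_cost_def linear_cost_def
    intro: bdd_belowI[of _ 0]\<close>)
  then show ?thesis
    by (simp add: circular_cost_def linear_cost_def)
qed

end
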